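(* Let $\beta=\frac{1}{16}$, let $S$ be a string of length $n$, let $d\ge1$, and let $1\le x<y\le n$ with $y-x+1$ even. Let $p_1,\dots,p_{2\log n}$ be primes chosen independently and uniformly at random from the primes in $\left[\frac{d}{\beta}\log^2 n,\frac{34d}{\beta}\log^2 n\right]$. Then: (1) If $\mathsf{HAM}(S[x,y],S[x,y]^R)\le d$, then $\Delta(x,y)\le d$. (2) If $\mathsf{HAM}(S[x,y],S[x,y]^R)\ge 2d$, then $\Delta(x,y)>(1+\beta)d$ with probability at least $1-\frac{1}{n^3}$.
   Context: $S[x,y]=S[x]S[x+1]\cdots S[y]$; for a string $T$ of length $m$, $T^R$ is its reverse and $\mathsf{HAM}(T,T^R)=|\{i: T[i]\neq T[m+1-i]\}|$. A position $i\in[x,y]$ is a mismatch of $S[x,y]$ if $S[i]\neq S[x+y-i]$ (so $\mathsf{HAM}(S[x,y],S[x,y]^R)$ is the number of mismatch positions). For each $j$, $\Delta_j(x,y)$ is the number of residues $r\in\{0,1,\dots,p_j-1\}$ such that the first-level subpattern of $S[x,y]$ at positions $\equiv r\pmod{p_j}$ differs from its mirrored counterpart, i.e. such that there is a mismatch position $i\in[x,y]$ with $i\equiv r \pmod{p_j}$. $\Delta(x,y)=\max_j\Delta_j(x,y)$. $\log$ is base 2. *)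

theory Defs
  imports "HOL-Probability.Probability" "HOL-Computational_Algebra.Primes"
begin

(* A string S of length n is modelled as S :: nat => 'a, read at positions 1..n.
   S[x,y] = S x S (x+1) ... S y. *)

definition beta :: real where "beta = 1 / 16"

definition mismatches :: "(nat \<Rightarrow> 'a) \<Rightarrow> nat \<Rightarrow> nat \<Rightarrow> nat set" where
  "mismatches S x y = {i \<in> {x..y}. S i \<noteq> S (x + y - i)}"

definition ham_rev :: "(nat \<Rightarrow> 'a) \<Rightarrow> nat \<Rightarrow> nat \<Rightarrow> nat" where
  "ham_rev S x y = card (mismatches S x y)"

definition Delta_p :: "(nat \<Rightarrow> 'a) \<Rightarrow> nat \<Rightarrow> nat \<Rightarrow> nat \<Rightarrow> nat" where
  "Delta_p S x y p = card {r \<in> {0..<p}. \<exists>i \<in> mismatches S x y. i mod p = r}"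

definition Delta :: "(nat \<Rightarrow> 'a) \<Rightarrow> nat \<Rightarrow> nat \<Rightarrow> nat \<Rightarrow> (nat \<Rightarrow> nat) \<Rightarrow> nat" where
  "Delta S x y k ps = Max ((\<lambda>j. Delta_p S x y (ps j)) ` {..<k})"

definition num_primes :: "nat \<Rightarrow> nat" where
  "num_primes n = nat \<lceil>2 * log 2 (real n)\<rceil>"

definition prime_range :: "nat \<Rightarrow> nat \<Rightarrow> nat set" where
  "prime_range n d = {p. prime p \<and> real d / beta * (log 2 (real n))\<^sup>2 \<le> real p
                         \<and> real p \<le> 34 * real d / beta * (log 2 (real n))\<^sup>2}"

(* sample space of independent uniform choices p_1..p_k *)
definition prime_tuples :: "nat \<Rightarrow> nat \<Rightarrow> (nat \<Rightarrow> nat) set" where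
  "prime_tuples n d = PiE {..<num_primes n} (\<lambda>_. prime_range n d)"

end

theory Submission
  imports Defs
begin

text \<open>Part (1) holds deterministically: the residues mod \<open>p\<close> of the mismatch positions
  number at most \<open>HAM(S[x,y], S[x,y]\<^sup>R)\<close>.

  For part (2) fix \<open>2d\<close> mismatch positions. A prime \<open>p \<ge> P = 16 d log\<^sup>2 n\<close> with
  \<open>\<Delta>\<^sub>p \<le> (1+\<beta>)d\<close> must identify at least \<open>15d/16\<close> pairs of them modulo \<open>p\<close>, i.e. divide
  their differences. A difference below \<open>n\<close> has at most \<open>log n / log P\<close> prime divisors
  \<open>\<ge> P\<close>, so double counting over the \<open>\<le> 4d\<^sup>2\<close> pairs bounds the number of such bad primes by
  \<open>(64/15) d log n / log P\<close>. A Chebyshev-type estimate, derived from the prime factorisation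
  of \<open>(2m choose m)\<close> and Erd\H{o}s' primorial bound, gives at least \<open>5P / log P\<close> primes in
  \<open>[P, 34P]\<close>. Hence at most an eighth of the range is bad, and all \<open>\<lceil>2 log n\<rceil>\<close>
  independent primes are bad with probability at most \<open>(1/8)\<^bsup>log n\<^esup> = n\<^bsup>-3\<^esup>\<close>.\<close>

section \<open>Legendre's formula and Chebyshev-type bounds\<close>

lemma less_prime_power_self:
  fixes p n :: nat
  assumes "prime p"
  shows "n < p ^ n"
proof -
  have "(2::nat) ^ n \<le> p ^ n"
    using prime_ge_2_nat[OF assms] by (rule power_mono) simp
  then show ?thesis using less_exp[of n] by linarith
qed

lemma multiplicity_eq_sum_prime_power_dvd:
  fixes p m :: nat
  assumes "prime p" "m > 0"
  shows "multiplicity p m = (\<Sum>k\<in>{1..m}. of_bool (p ^ k dvd m))"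
proof -
  have "p ^ multiplicity p m \<le> m"
    using assms by (intro dvd_imp_le multiplicity_dvd)
  moreover have "multiplicity p m < p ^ multiplicity p m"
    using assms(1) by (rule less_prime_power_self)
  ultimately have le: "multiplicity p m \<le> m" by linarith
  have dvd_iff: "p ^ k dvd m \<longleftrightarrow> k \<le> multiplicity p m" for k
    using assms power_dvd_iff_le_multiplicity[of m p k] not_prime_unit by blast
  have "{1..m} \<inter> {k. p ^ k dvd m} = {1..multiplicity p m}"
    using le by (simp add: dvd_iff set_eq_iff) linarith
  then show ?thesis by simp
qed

lemma Suc_div_eq_div_plus_dvd:
  fixes n q :: nat
  assumes "q > 0"
  shows "Suc n div q = n div q + of_bool (q dvd Suc n)"
  using assms by (simp add: div_Suc dvd_eq_mod_eq_0 mod_Suc)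

text \<open>Legendre's formula, truncated at \<open>k = n\<close> since \<open>p\<^sup>k > n\<close> beyond.\<close>

lemma multiplicity_fact_nat:
  fixes p :: nat
  assumes "prime p"
  shows "multiplicity p (fact n :: nat) = (\<Sum>k\<in>{1..n}. n div p ^ k)"
proof (induction n)
  case 0
  then show ?case by simp
next
  case (Suc n)
  have "multiplicity p (fact (Suc n) :: nat) = multiplicity p (Suc n * fact n)"
    by (simp only: fact_Suc of_nat_id)
  also have "\<dots> = multiplicity p (Suc n) + multiplicity p (fact n :: nat)"
    using assms by (intro prime_elem_multiplicity_mult_distrib) auto
  finally have mult_Suc: "multiplicity p (fact (Suc n) :: nat) = \<dots>" .
  have "n div p ^ Suc n = 0"
    using less_prime_power_self[OF assms, of "Suc n"] by (simp only: div_less Suc_lessD)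
  then have "(\<Sum>k\<in>{1..n}. n div p ^ k) = (\<Sum>k\<in>{1..Suc n}. n div p ^ k)"
    by simp
  moreover have "(\<Sum>k\<in>{1..Suc n}. Suc n div p ^ k)
      = (\<Sum>k\<in>{1..Suc n}. n div p ^ k) + (\<Sum>k\<in>{1..Suc n}. of_bool (p ^ k dvd Suc n))"
    using assms prime_gt_0_nat
    by (simp only: sum.distrib[symmetric] Suc_div_eq_div_plus_dvd zero_less_power)
  ultimately show ?case
    using Suc assms mult_Suc by (simp only: multiplicity_eq_sum_prime_power_dvd zero_less_Suc)
qed

lemma multiplicity_fact_nat_upto:
  fixes p :: nat
  assumes "prime p" "n \<le> N"
  shows "multiplicity p (fact n :: nat) = (\<Sum>k\<in>{1..N}. n div p ^ k)"
proof -
  have "n div p ^ k = 0" if "k > n" for k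
    using less_prime_power_self[OF assms(1), of k] that by simp
  then show ?thesis
    using assms by (simp add: multiplicity_fact_nat, intro sum.mono_neutral_left) auto
qed

lemma double_div_minus_twice_div_le_one:
  fixes m q :: nat
  assumes "q > 0"
  shows "2 * (m div q) \<le> 2 * m div q" and "2 * m div q - 2 * (m div q) \<le> 1"
proof -
  have "2 * m = 2 * (m div q) * q + 2 * (m mod q)"
    by (metis div_mult_mod_eq distrib_left mult.assoc)
  then have eq: "2 * m div q = 2 * (m div q) + 2 * (m mod q) div q"
    using assms by simp
  then show "2 * (m div q) \<le> 2 * m div q" by simp
  have "2 * (m mod q) < 2 * q" using assms by simp
  then have "2 * (m mod q) div q \<le> 1"
    using assms by (metis One_nat_def div_less_iff_less_mult less_Suc_eq_le numeral_2_eq_2)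
  with eq show "2 * m div q - 2 * (m div q) \<le> 1" by simp
qed

text \<open>The classical bound behind Chebyshev's estimate: each prime power dividing
  \<open>(2m choose m)\<close> is at most \<open>2m\<close>, because every term of Legendre's formula for it is
  \<open>\<lfloor>2m/p^k\<rfloor> - 2\<lfloor>m/p^k\<rfloor> \<in> {0, 1}\<close> and vanishes once \<open>p^k > 2m\<close>.\<close>

lemma prime_power_multiplicity_central_binomial_le:
  fixes p m :: nat
  assumes p: "prime p" and "m > 0"
  shows "p ^ multiplicity p ((2 * m) choose m) \<le> 2 * m"
proof (rule ccontr)
  let ?e = "multiplicity p ((2 * m) choose m)"
  assume "\<not> ?thesis"
  then have big: "2 * m < p ^ ?e" by simp
  have p0: "p ^ k > 0" for k using p prime_gt_0_nat by simp
  have "fact (2 * m) = fact m * fact m * ((2 * m) choose m :: nat)"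
    using binomial_fact_lemma[of m "2 * m"] by (simp add: mult_2)
  then have "multiplicity p (fact (2 * m) :: nat)
      = multiplicity p (fact m :: nat) + multiplicity p (fact m :: nat) + ?e"
    using p by (simp add: prime_elem_multiplicity_mult_distrib)
  then have "?e = (\<Sum>k\<in>{1..2*m}. 2 * m div p ^ k) - (\<Sum>k\<in>{1..2*m}. 2 * (m div p ^ k))"
    using multiplicity_fact_nat_upto[OF p, of "2 * m" "2 * m"] multiplicity_fact_nat_upto[OF p, of m "2 * m"]
    by (simp add: sum_distrib_left[symmetric])
  also have "\<dots> = (\<Sum>k\<in>{1..2*m}. 2 * m div p ^ k - 2 * (m div p ^ k))"
    using double_div_minus_twice_div_le_one(1)[OF p0] by (simp add: sum_subtractf_nat)
  also have "\<dots> \<le> (\<Sum>k\<in>{1..2*m}. of_bool (p ^ k \<le> 2 * m))"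
    using double_div_minus_twice_div_le_one(2)[OF p0] by (intro sum_mono) auto
  also have "\<dots> = card ({1..2*m} \<inter> {k. p ^ k \<le> 2 * m})"
    by simp
  also have "\<dots> \<le> card {1..?e - 1}"
  proof (intro card_mono subsetI)
    fix k assume "k \<in> {1..2*m} \<inter> {k. p ^ k \<le> 2 * m}"
    then have "1 \<le> k" "p ^ k < p ^ ?e" using big by auto
    then show "k \<in> {1..?e - 1}"
      using p prime_gt_1_nat power_less_imp_less_exp by fastforce
  qed simp
  finally have "?e \<le> ?e - 1" by simp
  moreover have "?e > 0" using big \<open>m > 0\<close> by (cases ?e) auto
  ultimately show False by simp
qed

lemma prod_primes_dvd:
  fixes c :: nat
  assumes "finite T" "\<And>p. p \<in> T \<Longrightarrow> prime p \<and> p dvd c" "c \<noteq> 0"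
  shows "\<Prod>T dvd c"
proof (rule multiplicity_le_imp_dvd)
  show "\<Prod>T \<noteq> 0" using assms by (auto dest: prime_gt_0_nat)
  fix q :: nat assume q: "prime q"
  have "multiplicity q (\<Prod>T) = multiplicity q (\<Prod>p\<in>T. p ^ 1)" by simp
  also have "\<dots> = of_bool (q \<in> T)"
    using assms q by (subst multiplicity_prod_prime_powers) auto
  also have "\<dots> \<le> multiplicity q c"
    using assms q by (auto simp: prime_multiplicity_gt_zero_iff Suc_le_eq)
  finally show "multiplicity q (\<Prod>T) \<le> multiplicity q c" .
qed

lemma central_binomial_le_power_prime_count:
  fixes m :: nat
  assumes "m > 0"
  shows "(2 * m) choose m \<le> (2 * m) ^ card {p. prime p \<and> p \<le> 2 * m}"
proof -
  let ?C = "(2 * m) choose m"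
  have "?C = (\<Prod>p\<in>prime_factors ?C. p ^ multiplicity p ?C)"
    by (rule prime_factorization_nat) simp
  also have "\<dots> \<le> (\<Prod>p\<in>prime_factors ?C. 2 * m)"
    using assms by (intro prod_mono) (auto intro: prime_power_multiplicity_central_binomial_le)
  also have "\<dots> = (2 * m) ^ card (prime_factors ?C)" by simp
  also have "\<dots> \<le> (2 * m) ^ card {p. prime p \<and> p \<le> 2 * m}"
  proof (intro power_increasing card_mono)
    have "?C dvd fact (2 * m)"
      using binomial_fact_lemma[of m "2 * m"] by (metis dvd_triv_right le_add2 mult_2)
    then show "prime_factors ?C \<subseteq> {p. prime p \<and> p \<le> 2 * m}"
      by (auto simp: in_prime_factors_iff prime_dvd_fact_iff[symmetric] intro: dvd_trans)
  qed (use assms in auto)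
  finally show ?thesis .
qed

lemma odd_central_binomial_le: "(2 * m + 1) choose m \<le> 4 ^ m"
proof -
  have "2 * ((2 * m + 1) choose m) = (\<Sum>k\<in>{m, m + 1}. (2 * m + 1) choose k)"
    using binomial_symmetric[of m "2 * m + 1"] by simp
  also have "\<dots> \<le> (\<Sum>k\<le>2 * m + 1. (2 * m + 1) choose k)"
    by (rule sum_mono2) auto
  also have "\<dots> = 2 * 4 ^ m"
    by (simp only: choose_row_sum) (simp add: power_mult)
  finally show ?thesis by simp
qed

lemma prod_primes_between_dvd_binomial:
  "\<Prod>{p. prime p \<and> m + 1 < p \<and> p \<le> 2 * m + 1} dvd (2 * m + 1) choose m"
proof (rule prod_primes_dvd, safe)
  fix p assume p: "prime p" "m + 1 < p" "p \<le> 2 * m + 1"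
  have "fact (2 * m + 1) = (fact m * fact (m + 1) * ((2 * m + 1) choose m) :: nat)"
    using binomial_fact_lemma[of m "2 * m + 1"] by (simp add: ac_simps)
  moreover have "p dvd fact (2 * m + 1)" "\<not> p dvd fact m" "\<not> p dvd fact (m + 1)"
    using p by (simp_all only: prime_dvd_fact_iff)
  ultimately show "p dvd (2 * m + 1) choose m"
    using p(1) by (metis prime_dvd_mult_iff)
qed auto

text \<open>Erd\H{o}s' bound on the primorial: the primes in \<open>(m+1, 2m+1]\<close> divide
  \<open>(2m+1 choose m) \<le> 4^m\<close>, and even \<open>n > 2\<close> are not prime.\<close>

lemma primorial_le_four_power: "\<Prod>{p. prime p \<and> p \<le> n} \<le> 4 ^ n"
proof (induction n rule: less_induct)
  case (less n)
  have "n < 2 \<or> n = 2 \<or> (n > 2 \<and> even n) \<or> (\<exists>m. n = 2 * m + 1 \<and> m \<ge> 1)"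
    by presburger
  then consider "n < 2" | "n = 2" | "n > 2" "even n" | m where "n = 2 * m + 1" "m \<ge> 1"
    by blast
  then show ?case
  proof cases
    case 1
    then have "{p. prime p \<and> p \<le> n} = {}" by (auto dest: prime_ge_2_nat)
    then show ?thesis by (simp only: prod.empty) simp
  next
    case 2
    then have "{p. prime p \<and> p \<le> n} = {2}" by (auto dest: prime_ge_2_nat)
    then show ?thesis using 2 by simp
  next
    case 3
    then have "{p. prime p \<and> p \<le> n} = {p. prime p \<and> p \<le> n - 1}"
      using prime_odd_nat by (auto simp: le_eq_less_or_eq)
    then have "\<Prod>{p. prime p \<and> p \<le> n} = \<Prod>{p. prime p \<and> p \<le> n - 1}" by simp
    also have "\<dots> \<le> 4 ^ (n - 1)" using less[of "n - 1"] 3 by simp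
    also have "\<dots> \<le> 4 ^ n" by (rule power_increasing) auto
    finally show ?thesis .
  next
    case 4
    let ?A = "{p. prime p \<and> p \<le> m + 1}"
    let ?B = "{p. prime p \<and> m + 1 < p \<and> p \<le> 2 * m + 1}"
    have "\<Prod>{p. prime p \<and> p \<le> n} = \<Prod>?A * \<Prod>?B"
      using 4 by (subst prod.union_disjoint[symmetric]) (auto intro: prod.cong)
    also have "\<dots> \<le> 4 ^ (m + 1) * 4 ^ m"
    proof (rule mult_le_mono)
      show "\<Prod>?A \<le> 4 ^ (m + 1)" using less[of "m + 1"] 4 by simp
      have "\<Prod>?B \<le> (2 * m + 1) choose m"
        by (rule dvd_imp_le[OF prod_primes_between_dvd_binomial]) simp
      then show "\<Prod>?B \<le> 4 ^ m" using odd_central_binomial_le[of m] by linarith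
    qed
    also have "\<dots> = 4 ^ n" using 4 by (simp add: power_add[symmetric])
    finally show ?thesis .
  qed
qed

lemma card_prime_divisors_mult_log_le:
  fixes D :: nat and Q :: real
  assumes T: "\<And>p. p \<in> T \<Longrightarrow> prime p \<and> p dvd D \<and> Q \<le> real p" and "D > 0" "Q > 0"
  shows "real (card T) * log 2 Q \<le> log 2 (real D)"
proof -
  have "T \<subseteq> prime_factors D"
    using T \<open>D > 0\<close> by (auto simp: in_prime_factors_iff)
  then have fin: "finite T" by (rule finite_subset) simp
  have "\<Prod>T dvd D"
    by (rule prod_primes_dvd[OF fin]) (use T \<open>D > 0\<close> in auto)
  then have "\<Prod>T \<le> D" using \<open>D > 0\<close> by (rule dvd_imp_le)
  have "Q ^ card T = (\<Prod>p\<in>T. Q)" by simp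
  also have "\<dots> \<le> (\<Prod>p\<in>T. real p)"
    using T \<open>Q > 0\<close> by (intro prod_mono) force
  also have "\<dots> = real (\<Prod>T)" by simp
  also have "\<dots> \<le> real D"
    using \<open>\<Prod>T \<le> D\<close> by (simp only: of_nat_le_iff)
  finally have "log 2 (Q ^ card T) \<le> log 2 (real D)"
    using \<open>Q > 0\<close> by (intro log_mono) auto
  then show ?thesis using \<open>Q > 0\<close> by (simp add: log_nat_power)
qed

lemma log2_le_three_sqrt:
  fixes P :: real
  assumes "P \<ge> 1"
  shows "log 2 P \<le> 3 * sqrt P"
proof -
  have "ln P = 2 * ln (sqrt P)" using assms by (simp add: ln_sqrt)
  also have "\<dots> \<le> 2 * (sqrt P - 1)" using ln_le_minus_one[of "sqrt P"] assms by simp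
  finally have ln: "ln P \<le> 2 * (sqrt P - 1)" .
  have "log 2 P = ln P / ln 2" by (simp add: log_def)
  also have "\<dots> \<le> 2 * (sqrt P - 1) / (2 / 3)"
    using ln ln2_ge_two_thirds assms by (intro frac_le) auto
  also have "\<dots> \<le> 3 * sqrt P" by simp
  finally show ?thesis .
qed

lemma log2_ge_4:
  fixes P :: real
  assumes "P \<ge> 16"
  shows "log 2 P \<ge> 4"
  using assms log_le_cancel_iff[of 2 16 P] by (simp add: log_nat_power[of 2 2 4, simplified])

lemma card_primes_below_mult_log_le:
  fixes P :: real
  assumes P: "P \<ge> 16"
  shows "real (card {p. prime p \<and> real p < P}) * log 2 P \<le> sqrt P * log 2 P + 4 * P"
proof -
  let ?small = "{p. prime p \<and> real p \<le> sqrt P}"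
  let ?large = "{p. prime p \<and> sqrt P < real p \<and> real p < P}"
  have fin_small: "finite ?small"
    by (rule finite_subset[of _ "{..nat \<lfloor>sqrt P\<rfloor>}"]) (auto simp: le_nat_floor)
  have fin_large: "finite ?large"
    by (rule finite_subset[of _ "{..nat \<lfloor>P\<rfloor>}"]) (auto, linarith)
  have "real (card ?small) \<le> sqrt P"
  proof -
    have "?small \<subseteq> {1..nat \<lfloor>sqrt P\<rfloor>}"
      by (auto simp: le_nat_floor Suc_le_eq prime_gt_0_nat)
    then have "card ?small \<le> nat \<lfloor>sqrt P\<rfloor>"
      using card_mono[of "{1..nat \<lfloor>sqrt P\<rfloor>}"] by fastforce
    then have "real (card ?small) \<le> real (nat \<lfloor>sqrt P\<rfloor>)" by (simp only: of_nat_le_iff)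
    also have "\<dots> \<le> sqrt P" by (rule of_nat_floor) (use P in simp)
    finally show ?thesis .
  qed
  then have "real (card ?small) * log 2 P \<le> sqrt P * log 2 P"
    using log2_ge_4[OF P] by (intro mult_right_mono) auto
  moreover have "real (card ?large) * log 2 P \<le> 4 * P"
  proof -
    have "real (card ?large) * log 2 (sqrt P) \<le> log 2 (real (\<Prod>{p. prime p \<and> p \<le> nat \<lfloor>P\<rfloor>}))"
    proof (rule card_prime_divisors_mult_log_le)
      fix p assume p: "p \<in> ?large"
      then have "p \<le> nat \<lfloor>P\<rfloor>" by (auto intro!: le_nat_floor)
      with p show "prime p \<and> p dvd \<Prod>{p. prime p \<and> p \<le> nat \<lfloor>P\<rfloor>} \<and> sqrt P \<le> real p"
        by auto
    qed (use P in \<open>auto intro!: prod_pos dest: prime_gt_0_nat\<close>)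
    also have "\<dots> \<le> log 2 (4 ^ nat \<lfloor>P\<rfloor>)"
    proof (rule log_mono)
      have "real (\<Prod>{p. prime p \<and> p \<le> nat \<lfloor>P\<rfloor>}) \<le> real (4 ^ nat \<lfloor>P\<rfloor>)"
        using primorial_le_four_power by (simp only: of_nat_le_iff)
      then show "real (\<Prod>{p. prime p \<and> p \<le> nat \<lfloor>P\<rfloor>}) \<le> 4 ^ nat \<lfloor>P\<rfloor>" by simp
    qed (auto intro!: prod_pos dest: prime_gt_0_nat)
    also have "\<dots> = log 2 (2 ^ (2 * nat \<lfloor>P\<rfloor>))" by (simp add: power_mult)
    also have "\<dots> = 2 * real (nat \<lfloor>P\<rfloor>)" by simp
    finally have "real (card ?large) * log 2 (sqrt P) \<le> 2 * real (nat \<lfloor>P\<rfloor>)" .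
    moreover have "log 2 (sqrt P) = log 2 P / 2"
      using P by (simp add: log_def ln_sqrt)
    ultimately have "real (card ?large) * log 2 P \<le> 4 * real (nat \<lfloor>P\<rfloor>)" by simp
    then show ?thesis using P by linarith
  qed
  moreover have "card {p. prime p \<and> real p < P} \<le> card ?small + card ?large"
    by (rule order_trans[OF card_mono card_Un_le]) (use fin_small fin_large in auto)
  then have "real (card {p. prime p \<and> real p < P}) * log 2 P
      \<le> real (card ?small) * log 2 P + real (card ?large) * log 2 P"
    using log2_ge_4[OF P] by (simp flip: distrib_right of_nat_add add: mult_right_mono)
  ultimately show ?thesis by linarith
qed

lemma two_mult_le_prime_count_mult_log:
  fixes m :: nat
  assumes "m > 0"
  shows "2 * real m \<le> real (card {p. prime p \<and> p \<le> 2 * m} + 1) * log 2 (real (2 * m))"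
proof -
  let ?\<pi> = "card {p. prime p \<and> p \<le> 2 * m}"
  have "4 ^ m / (2 * real m) \<le> real ((2 * m) choose m)"
    by (rule central_binomial_lower_bound[OF assms])
  also have "\<dots> \<le> real ((2 * m) ^ ?\<pi>)"
    using central_binomial_le_power_prime_count[OF assms] by (simp only: of_nat_le_iff)
  finally have "4 ^ m \<le> real (2 * m) ^ (?\<pi> + 1)"
    using assms by (simp add: field_simps)
  then have "(2::real) ^ (2 * m) \<le> real (2 * m) ^ (?\<pi> + 1)"
    by (simp add: power_mult)
  then have "log 2 ((2::real) ^ (2 * m)) \<le> log 2 (real (2 * m) ^ (?\<pi> + 1))"
    by (intro log_mono) auto
  moreover have "log 2 ((2::real) ^ (2 * m)) = 2 * real m" by simp
  moreover have "log 2 (real (2 * m) ^ (?\<pi> + 1)) = real (?\<pi> + 1) * log 2 (real (2 * m))"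
    by (rule log_nat_power) (use assms in simp)
  ultimately show ?thesis by simp
qed

text \<open>Take \<open>2m \<approx> 34P\<close> in the previous bound and discard the primes below \<open>P\<close>.\<close>

lemma card_primes_between_mult_log_ge:
  fixes P :: real
  assumes P: "P \<ge> 16"
  shows "5 * P \<le> real (card {p. prime p \<and> P \<le> real p \<and> real p \<le> 34 * P}) * log 2 P"
proof -
  let ?l = "log 2 P"
  let ?R = "{p. prime p \<and> P \<le> real p \<and> real p \<le> 34 * P}"
  let ?small = "{p. prime p \<and> real p < P}"
  define m where "m = nat \<lfloor>17 * P\<rfloor>"
  have m: "real m \<le> 17 * P" "17 * P - 1 < real m" "m > 0"
    unfolding m_def using P by linarith+
  have l4: "?l \<ge> 4" using log2_ge_4[OF P] .
  have "card {p. prime p \<and> p \<le> 2 * m} \<le> card (?small \<union> ?R)"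
  proof (rule card_mono)
    show "finite (?small \<union> ?R)"
      by (rule finite_subset[of _ "{..nat \<lfloor>34 * P\<rfloor>}"]) (use P in \<open>auto intro!: le_nat_floor\<close>)
  qed (use m in auto)
  also have "\<dots> \<le> card ?small + card ?R" by (rule card_Un_le)
  finally have \<pi>: "real (card {p. prime p \<and> p \<le> 2 * m} + 1) \<le> real (card ?small) + real (card ?R) + 1"
    by simp
  have "log 2 (real (2 * m)) \<le> log 2 (64 * P)"
    using m P by (intro log_mono) auto
  also have "\<dots> = 6 + ?l"
    using P by (simp add: log_mult log_nat_power[of 2 2 6, simplified])
  finally have log_2m: "log 2 (real (2 * m)) \<le> 5 / 2 * ?l" using l4 by linarith
  have "2 * real m \<le> real (card {p. prime p \<and> p \<le> 2 * m} + 1) * log 2 (real (2 * m))"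
    by (rule two_mult_le_prime_count_mult_log[OF m(3)])
  also have "\<dots> \<le> (real (card ?small) + real (card ?R) + 1) * (5 / 2 * ?l)"
    using \<pi> log_2m m(3) by (intro mult_mono) auto
  moreover have "real (card ?small) * ?l \<le> 7 * P"
  proof -
    have "sqrt P * ?l \<le> sqrt P * (3 * sqrt P)"
      using log2_le_three_sqrt[of P] P by (intro mult_left_mono) auto
    also have "\<dots> = 3 * P" using P by simp
    finally show ?thesis
      using card_primes_below_mult_log_le[OF P] by linarith
  qed
  moreover have "?l \<le> 3 / 4 * P"
  proof -
    have "4 * sqrt P \<le> sqrt P * sqrt P"
      using P real_sqrt_le_mono[of 16 P] by (intro mult_right_mono) auto
    then show ?thesis using log2_le_three_sqrt[of P] P by simp
  qed
  ultimately show ?thesis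
    using m P by (simp add: algebra_simps)
qed

section \<open>Collisions of residues\<close>

lemma card_minus_card_image_le_collisions:
  fixes A :: "nat set" and f :: "nat \<Rightarrow> 'b"
  assumes fin: "finite A"
  shows "card A - card (f ` A) \<le> card {(i, j). i \<in> A \<and> j \<in> A \<and> i < j \<and> f i = f j}"
proof -
  define g where "g r = Min {i \<in> A. f i = r}" for r
  have g: "g r \<in> A \<and> f (g r) = r" if "r \<in> f ` A" for r
  proof -
    have "g r \<in> {i \<in> A. f i = r}"
      unfolding g_def using that fin by (intro Min_in) auto
    then show ?thesis by simp
  qed
  have g_le: "g (f j) \<le> j" if "j \<in> A" for j
    unfolding g_def using that fin by (intro Min_le) auto
  let ?firsts = "g ` f ` A"
  have "card ?firsts = card (f ` A)"
    by (rule card_image, rule inj_onI) (metis g)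
  moreover have "card (A - ?firsts) = card A - card ?firsts"
    using g fin by (intro card_Diff_subset) (auto intro: finite_subset)
  \<comment> \<open>every element that is not the first of its fibre collides with that first element\<close>
  moreover have "card (A - ?firsts) \<le> card {(i, j). i \<in> A \<and> j \<in> A \<and> i < j \<and> f i = f j}"
  proof (rule card_inj_on_le)
    show "inj_on (\<lambda>j. (g (f j), j)) (A - ?firsts)" by (rule inj_onI) auto
    show "(\<lambda>j. (g (f j), j)) ` (A - ?firsts) \<subseteq> {(i, j). i \<in> A \<and> j \<in> A \<and> i < j \<and> f i = f j}"
    proof clarify
      fix j assume j: "j \<in> A" "j \<notin> ?firsts"
      then have "g (f j) \<noteq> j" by (metis imageI)
      with g_le[OF j(1)] g[of "f j"] j(1)
      show "g (f j) \<in> A \<and> j \<in> A \<and> g (f j) < j \<and> f (g (f j)) = f j" by auto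
    qed
    show "finite {(i, j). i \<in> A \<and> j \<in> A \<and> i < j \<and> f i = f j}"
      by (rule finite_subset[of _ "A \<times> A"]) (use fin in auto)
  qed
  ultimately show ?thesis by simp
qed

lemma card_collision_primes_mult_log_le:
  fixes M B :: "nat set" and N :: nat and Q c :: real
  assumes fin_M: "finite M" and fin_B: "finite B" and M_le: "\<forall>i\<in>M. i \<le> N"
    and "N \<ge> 1" and Q: "Q \<ge> 1"
    and B: "\<And>p. p \<in> B \<Longrightarrow> prime p \<and> Q \<le> real p
                 \<and> c \<le> real (card M) - real (card ((\<lambda>i. i mod p) ` M))"
  shows "real (card B) * c * log 2 Q \<le> real (card M) ^ 2 * log 2 N"
proof -
  let ?pairs = "{(i, j). i \<in> M \<and> j \<in> M \<and> i < j}"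
  let ?divides = "\<lambda>p z. p dvd snd z - fst z"
  have fin_pairs: "finite ?pairs"
    by (rule finite_subset[of _ "M \<times> M"]) (use fin_M in auto)
  have c_le: "c \<le> real (card {z \<in> ?pairs. ?divides p z})" if "p \<in> B" for p
  proof -
    have "{z \<in> ?pairs. ?divides p z} = {(i, j). i \<in> M \<and> j \<in> M \<and> i < j \<and> i mod p = j mod p}"
      by auto (metis less_imp_le mod_eq_dvd_iff_nat)+
    then have "card M - card ((\<lambda>i. i mod p) ` M) \<le> card {z \<in> ?pairs. ?divides p z}"
      using card_minus_card_image_le_collisions[OF fin_M, of "\<lambda>i. i mod p"] by simp
    moreover have "card ((\<lambda>i. i mod p) ` M) \<le> card M" by (rule card_image_le[OF fin_M])
    ultimately show ?thesis using B[OF that] by linarith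
  qed
  have divisors: "real (card {p \<in> B. ?divides p z}) * log 2 Q \<le> log 2 N" if zP: "z \<in> ?pairs" for z
  proof -
    obtain i j where z: "z = (i, j)" "i \<in> M" "j \<in> M" "i < j" using zP by auto
    have "real (card {p \<in> B. ?divides p z}) * log 2 Q \<le> log 2 (real (j - i))"
      using z B Q by (intro card_prime_divisors_mult_log_le) auto
    also have "\<dots> \<le> log 2 N" using z M_le by (intro log_mono) auto
    finally show ?thesis .
  qed
  have "real (card B) * c * log 2 Q = (\<Sum>p\<in>B. c * log 2 Q)" by simp
  also have "\<dots> \<le> (\<Sum>p\<in>B. real (card {z \<in> ?pairs. ?divides p z}) * log 2 Q)"
    using c_le Q by (intro sum_mono mult_right_mono) auto
  also have "\<dots> = (\<Sum>p\<in>B. \<Sum>z\<in>{z \<in> ?pairs. ?divides p z}. log 2 Q)" by simp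
  also have "\<dots> = (\<Sum>z\<in>?pairs. \<Sum>p\<in>{p \<in> B. ?divides p z}. log 2 Q)"
    by (rule sum.swap_restrict[OF fin_B fin_pairs])
  also have "\<dots> = (\<Sum>z\<in>?pairs. real (card {p \<in> B. ?divides p z}) * log 2 Q)" by simp
  also have "\<dots> \<le> (\<Sum>z\<in>?pairs. log 2 N)" by (intro sum_mono divisors)
  also have "\<dots> = real (card ?pairs) * log 2 N" by simp
  also have "\<dots> \<le> real (card M) ^ 2 * log 2 N"
  proof (intro mult_right_mono)
    have "card ?pairs \<le> card (M \<times> M)" by (rule card_mono) (use fin_M in auto)
    then show "real (card ?pairs) \<le> real (card M) ^ 2"
      by (simp add: card_cartesian_product power2_eq_square flip: of_nat_mult)
  qed (use \<open>N \<ge> 1\<close> in simp)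
  finally show ?thesis .
qed

section \<open>Residues of mismatch positions\<close>

lemma Delta_p_eq_card_image:
  assumes "p > 0"
  shows "Delta_p S x y p = card ((\<lambda>i. i mod p) ` mismatches S x y)"
proof -
  have "{r \<in> {0..<p}. \<exists>i \<in> mismatches S x y. i mod p = r} = (\<lambda>i. i mod p) ` mismatches S x y"
    using assms by auto
  then show ?thesis unfolding Delta_p_def by simp
qed

lemma card_image_mod_le_Delta_p:
  assumes "M \<subseteq> mismatches S x y" "p > 0"
  shows "card ((\<lambda>i. i mod p) ` M) \<le> Delta_p S x y p"
  unfolding Delta_p_eq_card_image[OF assms(2)] using assms(1)
  by (intro card_mono image_mono) (auto simp: mismatches_def)

lemma Delta_p_le_ham_rev: "Delta_p S x y p \<le> ham_rev S x y"
proof -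
  have fin: "finite (mismatches S x y)" unfolding mismatches_def by simp
  have "Delta_p S x y p \<le> card ((\<lambda>i. i mod p) ` mismatches S x y)"
    unfolding Delta_p_def using fin by (intro card_mono) auto
  also have "\<dots> \<le> ham_rev S x y"
    unfolding ham_rev_def using fin by (rule card_image_le)
  finally show ?thesis .
qed

lemma less_Delta_iff:
  assumes "k > 0"
  shows "c < real (Delta S x y k ps) \<longleftrightarrow> (\<exists>j<k. c < real (Delta_p S x y (ps j)))"
proof -
  have "Delta S x y k ps \<in> (\<lambda>j. Delta_p S x y (ps j)) ` {..<k}"
    unfolding Delta_def using assms by (intro Max_in) auto
  moreover have "Delta_p S x y (ps j) \<le> Delta S x y k ps" if "j < k" for j
    unfolding Delta_def using that by (intro Max_ge) auto
  ultimately show ?thesis by (force intro: less_le_trans)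
qed

lemma Delta_le_ham_rev:
  assumes "k > 0"
  shows "Delta S x y k ps \<le> ham_rev S x y"
  unfolding Delta_def using assms Delta_p_le_ham_rev by (subst Max_le_iff) auto

lemma prob_exists_coordinate_not_in:
  fixes I :: "'a set" and R B :: "'b set"
  assumes "finite I" "finite R" "R \<noteq> {}" "B \<subseteq> R"
    and E: "\<And>f. f \<in> PiE I (\<lambda>_. R) \<Longrightarrow> f \<in> E \<longleftrightarrow> (\<exists>i\<in>I. f i \<notin> B)"
  shows "measure_pmf.prob (pmf_of_set (PiE I (\<lambda>_. R))) E
           = 1 - (real (card B) / real (card R)) ^ card I"
proof -
  let ?A = "PiE I (\<lambda>_. R)" and ?F = "PiE I (\<lambda>_. B)"
  have fin: "finite ?A" using assms by (simp add: finite_PiE)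
  have sub: "?F \<subseteq> ?A" using assms by (intro PiE_mono) auto
  have "?A \<inter> E = ?A - ?F"
    using E by (auto simp: PiE_iff)
  then have "measure_pmf.prob (pmf_of_set ?A) E = real (card (?A - ?F)) / real (card ?A)"
    using assms fin by (simp add: measure_pmf_of_set PiE_eq_empty_iff)
  also have "\<dots> = (real (card ?A) - real (card ?F)) / real (card ?A)"
    using sub fin by (simp add: card_Diff_subset finite_subset card_mono)
  also have "\<dots> = 1 - (real (card B) / real (card R)) ^ card I"
    using assms by (simp add: card_PiE field_simps)
  finally show ?thesis .
qed

lemma prob_less_Delta:
  assumes "k > 0" "finite R" "R \<noteq> {}"
  shows "measure_pmf.prob (pmf_of_set (PiE {..<k} (\<lambda>_. R))) {ps. c < real (Delta S x y k ps)}
           = 1 - (real (card {p \<in> R. real (Delta_p S x y p) \<le> c}) / real (card R)) ^ k"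
proof -
  have "measure_pmf.prob (pmf_of_set (PiE {..<k} (\<lambda>_. R))) {ps. c < real (Delta S x y k ps)}
      = 1 - (real (card {p \<in> R. real (Delta_p S x y p) \<le> c}) / real (card R)) ^ card {..<k}"
    by (rule prob_exists_coordinate_not_in)
       (use assms in \<open>auto simp: less_Delta_iff[OF assms(1)] PiE_iff not_le\<close>)
  then show ?thesis by simp
qed

lemma eighth_power_num_primes_le:
  assumes "n \<ge> 1"
  shows "(1 / 8) ^ num_primes n \<le> 1 / real n ^ 3"
proof -
  have L: "0 \<le> log 2 (real n)" using assms by simp
  then have "log 2 (real n) \<le> of_int \<lceil>2 * log 2 (real n)\<rceil>"
    using le_of_int_ceiling[of "2 * log 2 (real n)"] by linarith
  also have "\<dots> = real (num_primes n)"
    unfolding num_primes_def using L by simp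
  finally have "2 powr log 2 (real n) \<le> 2 powr real (num_primes n)" by simp
  then have "real n \<le> 2 ^ num_primes n" using assms by (simp add: powr_realpow)
  then have "real n ^ 3 \<le> (2 ^ num_primes n) ^ 3" by (intro power_mono) auto
  also have "\<dots> = (2 ^ 3) ^ num_primes n" by (simp only: power_mult[symmetric] mult.commute)
  finally have "real n ^ 3 \<le> 8 ^ num_primes n" by simp
  then have "1 / 8 ^ num_primes n \<le> 1 / real n ^ 3"
    using assms by (intro frac_le) auto
  then show ?thesis by (simp add: power_one_over)
qed

lemma few_primes_with_few_residues:
  fixes M :: "nat set" and n d :: nat
  assumes fin: "finite M" and card_M: "card M = 2 * d" and M_le: "\<forall>i\<in>M. i \<le> n"
    and "d \<ge> 1" "n \<ge> 2"
  shows "card (prime_range n d) > 0"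
    and "8 * card {p \<in> prime_range n d. real (card ((\<lambda>i. i mod p) ` M)) \<le> (1 + beta) * real d}
           \<le> card (prime_range n d)"
proof -
  let ?L = "log 2 (real n)"
  let ?Bad = "{p \<in> prime_range n d. real (card ((\<lambda>i. i mod p) ` M)) \<le> (1 + beta) * real d}"
  define P where "P = 16 * real d * ?L\<^sup>2"
  have R: "prime_range n d = {p. prime p \<and> P \<le> real p \<and> real p \<le> 34 * P}"
    unfolding prime_range_def P_def beta_def by (simp add: algebra_simps)
  have L1: "?L \<ge> 1" using \<open>n \<ge> 2\<close> by simp
  have dL: "16 * (real d * ?L) \<le> P"
    unfolding P_def using L1 \<open>d \<ge> 1\<close> by (simp add: power2_eq_square)
  have "1 * 1 \<le> real d * ?L" using L1 \<open>d \<ge> 1\<close> by (intro mult_mono) auto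
  then have P16: "P \<ge> 16" using dL by linarith
  have many: "5 * P \<le> real (card (prime_range n d)) * log 2 P"
    unfolding R by (rule card_primes_between_mult_log_ge[OF P16])
  have l4: "log 2 P \<ge> 4" using log2_ge_4[OF P16] .
  then show "card (prime_range n d) > 0"
    using many P16 by (cases "card (prime_range n d)") auto
  then have "finite (prime_range n d)" by (rule card_ge_0_finite)
  then have "finite ?Bad" by (rule finite_subset[rotated]) auto
  then have "real (card ?Bad) * (15 / 16 * real d) * log 2 P \<le> real (card M) ^ 2 * ?L"
  proof (rule card_collision_primes_mult_log_le[OF fin _ M_le])
    fix p assume "p \<in> ?Bad"
    then show "prime p \<and> P \<le> real p
        \<and> 15 / 16 * real d \<le> real (card M) - real (card ((\<lambda>i. i mod p) ` M))"
      by (auto simp: R card_M beta_def)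
  qed (use \<open>n \<ge> 2\<close> P16 in auto)
  then have "(15 / 16 * (real (card ?Bad) * log 2 P)) * real d \<le> (4 * (real d * ?L)) * real d"
    by (simp add: card_M algebra_simps power2_eq_square)
  then have "15 / 16 * (real (card ?Bad) * log 2 P) \<le> 4 * (real d * ?L)"
    by (rule mult_right_le_imp_le) (use \<open>d \<ge> 1\<close> in simp)
  then have "8 * (real (card ?Bad) * log 2 P) \<le> real (card (prime_range n d)) * log 2 P"
    using dL P16 many by linarith
  then have "real (8 * card ?Bad) * log 2 P \<le> real (card (prime_range n d)) * log 2 P"
    by (simp add: mult.assoc)
  then have "real (8 * card ?Bad) \<le> real (card (prime_range n d))"
    by (rule mult_right_le_imp_le) (use l4 in simp)
  then show "8 * card ?Bad \<le> card (prime_range n d)"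
    by (simp only: of_nat_le_iff)
qed

lemma few_primes_with_small_Delta_p:
  assumes "2 * d \<le> ham_rev S x y" "y \<le> n" "d \<ge> 1" "n \<ge> 2"
  shows "card (prime_range n d) > 0"
    and "8 * card {p \<in> prime_range n d. real (Delta_p S x y p) \<le> (1 + beta) * real d}
           \<le> card (prime_range n d)"
proof -
  let ?R = "prime_range n d"
  obtain M where M: "M \<subseteq> mismatches S x y" "card M = 2 * d" "finite M"
    using assms(1) unfolding ham_rev_def by (rule obtain_subset_with_card_n)
  have "\<forall>i\<in>M. i \<le> n" using M(1) assms by (auto simp: mismatches_def)
  note few_bad = few_primes_with_few_residues[OF M(3,2) this \<open>d \<ge> 1\<close> \<open>n \<ge> 2\<close>]
  then show "card ?R > 0" by blast
  let ?Bad = "{p \<in> ?R. real (Delta_p S x y p) \<le> (1 + beta) * real d}"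
  have "?Bad \<subseteq> {p \<in> ?R. real (card ((\<lambda>i. i mod p) ` M)) \<le> (1 + beta) * real d}"
  proof
    fix p assume p: "p \<in> ?Bad"
    then have "p > 0" by (simp add: prime_range_def prime_gt_0_nat)
    then have "real (card ((\<lambda>i. i mod p) ` M)) \<le> real (Delta_p S x y p)"
      using card_image_mod_le_Delta_p[OF M(1)] by simp
    with p show "p \<in> {p \<in> ?R. real (card ((\<lambda>i. i mod p) ` M)) \<le> (1 + beta) * real d}"
      by simp
  qed
  then have "card ?Bad \<le> card {p \<in> ?R. real (card ((\<lambda>i. i mod p) ` M)) \<le> (1 + beta) * real d}"
    by (rule card_mono[rotated]) (use card_ge_0_finite[OF few_bad(1)] in auto)
  with few_bad(2) show "8 * card ?Bad \<le> card ?R" by linarith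
qed

theorem lemma5p1:
  fixes S :: "nat \<Rightarrow> 'a" and n d x y :: nat
  assumes "d \<ge> 1" and "1 \<le> x" and "x < y" and "y \<le> n" and "even (y - x + 1)"
  shows "(ham_rev S x y \<le> d \<longrightarrow>
            (\<forall>ps \<in> prime_tuples n d. Delta S x y (num_primes n) ps \<le> d))
       \<and> (ham_rev S x y \<ge> 2 * d \<longrightarrow>
            measure_pmf.prob (pmf_of_set (prime_tuples n d))
              {ps. real (Delta S x y (num_primes n) ps) > (1 + beta) * real d}
            \<ge> 1 - 1 / real n ^ 3)"
proof (intro conjI impI)
  let ?k = "num_primes n" and ?R = "prime_range n d"
  let ?Bad = "{p \<in> ?R. real (Delta_p S x y p) \<le> (1 + beta) * real d}"
  have "n \<ge> 2" using assms by simp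
  then have k: "?k > 0" unfolding num_primes_def by simp
  show "\<forall>ps \<in> prime_tuples n d. Delta S x y ?k ps \<le> d" if "ham_rev S x y \<le> d"
    using Delta_le_ham_rev[OF k] that le_trans by blast
  assume "ham_rev S x y \<ge> 2 * d"
  note few = few_primes_with_small_Delta_p[OF this \<open>y \<le> n\<close> \<open>d \<ge> 1\<close> \<open>n \<ge> 2\<close>]
  have "(real (card ?Bad) / real (card ?R)) ^ ?k \<le> (1 / 8) ^ ?k"
    using few by (intro power_mono) (simp_all add: field_simps)
  moreover have "(1 / 8) ^ ?k \<le> 1 / real n ^ 3"
    by (rule eighth_power_num_primes_le) (use \<open>n \<ge> 2\<close> in simp)
  moreover have "measure_pmf.prob (pmf_of_set (prime_tuples n d))
      {ps. real (Delta S x y ?k ps) > (1 + beta) * real d} = 1 - (real (card ?Bad) / real (card ?R)) ^ ?k"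
    unfolding prime_tuples_def using few(1)
    by (intro prob_less_Delta[OF k]) (auto intro: card_ge_0_finite)
  ultimately show "1 - 1 / real n ^ 3 \<le> measure_pmf.prob (pmf_of_set (prime_tuples n d))
      {ps. real (Delta S x y ?k ps) > (1 + beta) * real d}"
    by linarith
qed

end
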